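(* Let $R\subseteq\mathbb{R}^2$ be open and let $f:R\to\mathbb{R}^2$ be $C^1$. Let $R_0$ be a connected component of $R\setminus f^{-1}(f(S)\cup C(f))$, choose $z_0\in R_0$, let $w_0=f(z_0)$, and let $\Omega_0$ be the connected component of $\mathbb{R}^2\setminus(f(S)\cup C(f))$ containing $w_0$. Then $f(R_0)=\Omega_0$.
   Context: Write $f=(u,v)$; $J_f=u_xv_y-u_yv_x$ and $S=\{z\in R: J_f(z)=0\}$. $C(f)$ is the set of finite points $\zeta\in\mathbb{R}^2$ for which there is a sequence $(z_n)\subset R$ converging to a point of $\partial R$ or with $|z_n|\to\infty$, such that $f(z_n)\to\zeta$. *)

theory Defs
  imports "HOL-Analysis.Analysis"
begin

text \<open>The plane R^2 is modelled as real \<times> real; f = (u,v) with u = fst o f, v = snd o f.\<close>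

definition C1_on :: "(real \<times> real) set \<Rightarrow> (real \<times> real \<Rightarrow> real \<times> real) \<Rightarrow> bool" where
  "C1_on R f \<longleftrightarrow> (\<exists>D. (\<forall>z\<in>R. (f has_derivative D z) (at z)) \<and>
      continuous_on R (\<lambda>z. D z (1,0)) \<and> continuous_on R (\<lambda>z. D z (0,1)))"

definition jacobian_det :: "(real \<times> real \<Rightarrow> real \<times> real) \<Rightarrow> real \<times> real \<Rightarrow> real" where
  "jacobian_det f z = (let D = frechet_derivative f (at z) in
     fst (D (1,0)) * snd (D (0,1)) - fst (D (0,1)) * snd (D (1,0)))"

definition critical_set :: "(real \<times> real) set \<Rightarrow> (real \<times> real \<Rightarrow> real \<times> real) \<Rightarrow> (real \<times> real) set" where
  "critical_set R f = {z \<in> R. jacobian_det f z = 0}"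

definition cluster_set :: "(real \<times> real) set \<Rightarrow> (real \<times> real \<Rightarrow> real \<times> real) \<Rightarrow> (real \<times> real) set" where
  "cluster_set R f = {\<zeta>. \<exists>zs :: nat \<Rightarrow> real \<times> real. (\<forall>n. zs n \<in> R) \<and>
      ((\<exists>p\<in>frontier R. zs \<longlonglongrightarrow> p) \<or> filterlim (\<lambda>n. norm (zs n)) at_top sequentially) \<and>
      (\<lambda>n. f (zs n)) \<longlonglongrightarrow> \<zeta>}"

end

theory Submission
  imports Defs
begin

(* The exceptional set B = f(S) \<union> C(f) is closed. C(f) is closed by a diagonal argument
   along a compact exhaustion of R: points of C(f) are approximated by values f(z) with z
   outside ever larger compacts, and such a sequence cannot have a subsequence converging
   in R unless its limit value is again in C(f). Conversely, if f(z_n) tends to a value off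
   C(f), a subsequence of z_n converges in R; this also shows that limits of critical values
   off C(f) are critical values, since J_f is continuous.

   On R0 the Jacobian does not vanish, so f is an open map there and f(R0) is open. It is
   relatively closed in \<Omega>0: a limit w \<in> \<Omega>0 of values f(z_n), z_n \<in> R0, is not in C(f),
   so some z_n converge to p \<in> R with f(p) = w \<notin> B, and p \<in> R0 because components are
   relatively closed. As \<Omega>0 is connected, f(R0) = \<Omega>0. *)

lemma closedin_sequentially:
  assumes "closedin (top_of_set U) S" "\<And>n. x n \<in> S" "x \<longlonglongrightarrow> p" "p \<in> U"
  shows "p \<in> S"
proof -
  obtain T where "closed T" "S = U \<inter> T"
    using assms(1) by (auto simp: closedin_closed)
  then show ?thesis
    using closed_sequentially[of T x p] assms(2-4) by blast
qed

lemma cluster_set_escapes_compact: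
  fixes R K :: "(real \<times> real) set" and f :: "real \<times> real \<Rightarrow> real \<times> real"
  assumes "open R" "\<zeta> \<in> cluster_set R f" "compact K" "K \<subseteq> R" "e > 0"
  shows "\<exists>z\<in>R - K. dist (f z) \<zeta> < e"
proof -
  obtain zs where zsR: "\<And>n. zs n \<in> R"
    and escape: "(\<exists>p\<in>frontier R. zs \<longlonglongrightarrow> p) \<or> filterlim (\<lambda>n. norm (zs n)) at_top sequentially"
    and lim: "(\<lambda>n. f (zs n)) \<longlonglongrightarrow> \<zeta>"
    using assms(2) unfolding cluster_set_def by blast
  have "\<forall>\<^sub>F n in sequentially. zs n \<notin> K"
    using escape
  proof
    assume "\<exists>p\<in>frontier R. zs \<longlonglongrightarrow> p"
    then obtain p where "p \<in> frontier R" "zs \<longlonglongrightarrow> p" by blast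
    moreover have "p \<notin> K"
      using \<open>p \<in> frontier R\<close> assms(1,4) frontier_disjoint_eq by blast
    ultimately show ?thesis
      using topological_tendstoD[of zs p sequentially "- K"] compact_imp_closed[OF assms(3)]
      by (simp add: open_Compl)
  next
    assume "filterlim (\<lambda>n. norm (zs n)) at_top sequentially"
    moreover obtain b where b: "\<And>z. z \<in> K \<Longrightarrow> norm z \<le> b"
      using compact_imp_bounded[OF assms(3)] by (auto simp: bounded_iff)
    ultimately have "\<forall>\<^sub>F n in sequentially. b < norm (zs n)"
      by (simp add: filterlim_at_top_dense)
    then show ?thesis
      by eventually_elim (meson b not_le)
  qed
  moreover have "\<forall>\<^sub>F n in sequentially. dist (f (zs n)) \<zeta> < e"
    using lim assms(5) by (rule tendstoD)
  ultimately have "\<forall>\<^sub>F n in sequentially. zs n \<notin> K \<and> dist (f (zs n)) \<zeta> < e"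
    by (rule eventually_conj)
  then obtain n where "zs n \<notin> K" "dist (f (zs n)) \<zeta> < e"
    unfolding eventually_sequentially by blast
  then show ?thesis
    using zsR by blast
qed

lemma convergent_subseq_off_cluster_setE:
  fixes R :: "(real \<times> real) set" and f :: "real \<times> real \<Rightarrow> real \<times> real"
  assumes zR: "\<And>n. z n \<in> R" and lim: "(\<lambda>n. f (z n)) \<longlonglongrightarrow> w"
    and off: "w \<notin> cluster_set R f"
  obtains r p where "strict_mono r" "p \<in> R" "(z \<circ> r) \<longlonglongrightarrow> p"
proof -
  have "\<not> filterlim (\<lambda>n. norm (z n)) at_top sequentially"
    using zR lim off unfolding cluster_set_def by blast
  then obtain M where "\<exists>\<^sub>F n in sequentially. norm (z n) < M"
    by (auto simp: filterlim_at_top not_eventually not_le)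
  then have "infinite {n. norm (z n) < M}"
    by (simp add: frequently_cofinite flip: cofinite_eq_sequentially)
  then obtain s :: "nat \<Rightarrow> nat" where s: "strict_mono s" "\<And>n. norm (z (s n)) < M"
    using infinite_enumerate by blast
  have "bounded (range (z \<circ> s))"
    using s(2) by (auto simp: bounded_iff intro!: exI[of _ M] less_imp_le)
  then obtain t p where t: "strict_mono t" and conv: "(z \<circ> s \<circ> t) \<longlonglongrightarrow> p"
    using bounded_imp_convergent_subsequence by blast
  have "p \<in> closure R"
    unfolding closure_sequential using conv zR by (intro exI[of _ "z \<circ> s \<circ> t"]) simp
  moreover have "p \<notin> frontier R"
  proof
    assume "p \<in> frontier R"
    moreover have "(\<lambda>n. f ((z \<circ> s \<circ> t) n)) \<longlonglongrightarrow> w"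
      using LIMSEQ_subseq_LIMSEQ[OF lim strict_mono_o[OF s(1) t]] by (simp add: comp_def)
    ultimately have "w \<in> cluster_set R f"
      unfolding cluster_set_def using zR conv by (intro CollectI exI[of _ "z \<circ> s \<circ> t"]) auto
    then show False
      using off by blast
  qed
  ultimately have "p \<in> R"
    using interior_subset[of R] by (auto simp: frontier_def)
  then show thesis
    using that strict_mono_o[OF s(1) t] conv by (simp add: comp_assoc)
qed

lemma closed_cluster_set:
  fixes R :: "(real \<times> real) set" and f :: "real \<times> real \<Rightarrow> real \<times> real"
  assumes "open R"
  shows "closed (cluster_set R f)"
  unfolding closed_sequential_limits
proof (intro allI impI, elim conjE)
  fix \<zeta> w assume \<zeta>: "\<forall>n. \<zeta> n \<in> cluster_set R f" and lim\<zeta>: "\<zeta> \<longlonglongrightarrow> w"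
  obtain K :: "nat \<Rightarrow> (real \<times> real) set" where K: "\<And>n. compact (K n)" "\<And>n. K n \<subseteq> R"
    and exhaust: "\<And>C. compact C \<Longrightarrow> C \<subseteq> R \<Longrightarrow> \<exists>N. \<forall>n\<ge>N. C \<subseteq> K n"
    using open_Union_compact_subsets[OF assms] by metis
  have "\<exists>z\<in>R - K n. dist (f z) (\<zeta> n) < inverse (real (Suc n))" for n
    using cluster_set_escapes_compact[OF assms \<zeta>[rule_format, of n] K(1,2)] by simp
  then obtain z where z: "\<And>n. z n \<in> R - K n"
    and close: "\<And>n. dist (f (z n)) (\<zeta> n) < inverse (real (Suc n))"
    by metis
  then have zR: "\<And>n. z n \<in> R" and zK: "\<And>n. z n \<notin> K n"
    by auto
  have "(\<lambda>n. f (z n) - \<zeta> n) \<longlonglongrightarrow> 0"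
    by (rule Lim_null_comparison[OF _ LIMSEQ_inverse_real_of_nat])
       (use close in \<open>auto simp: dist_norm intro!: always_eventually less_imp_le\<close>)
  then have limfz: "(\<lambda>n. f (z n)) \<longlonglongrightarrow> w"
    using lim\<zeta> by (rule Lim_transform[rotated])
  show "w \<in> cluster_set R f"
  proof (rule ccontr)
    assume "w \<notin> cluster_set R f"
    then obtain r p where r: "strict_mono r" and "p \<in> R" and conv: "(z \<circ> r) \<longlonglongrightarrow> p"
      using convergent_subseq_off_cluster_setE[OF zR limfz] by blast
    then obtain \<delta> where "\<delta> > 0" "cball p \<delta> \<subseteq> R"
      using assms open_contains_cball by blast
    then obtain N where N: "\<And>n. n \<ge> N \<Longrightarrow> cball p \<delta> \<subseteq> K n"
      using exhaust[of "cball p \<delta>"] by auto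
    have "\<forall>\<^sub>F n in sequentially. dist ((z \<circ> r) n) p < \<delta>"
      using conv \<open>\<delta> > 0\<close> by (rule tendstoD)
    then have "\<exists>M. \<forall>n\<ge>M. dist p (z (r n)) < \<delta>"
      by (simp add: eventually_sequentially dist_commute)
    then obtain M where M: "\<And>n. n \<ge> M \<Longrightarrow> dist p (z (r n)) < \<delta>"
      by blast
    define n where "n = max M N"
    have "r n \<ge> N"
      using seq_suble[OF r, of n] by (simp add: n_def)
    moreover have "z (r n) \<in> cball p \<delta>"
      using M[of n] by (simp add: n_def less_imp_le)
    ultimately show False
      using N zK by blast
  qed
qed

lemma closure_image_off_cluster_setE:
  fixes R X :: "(real \<times> real) set" and f :: "real \<times> real \<Rightarrow> real \<times> real"
  assumes contf: "continuous_on R f" and "X \<subseteq> R"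
    and wcl: "w \<in> closure (f ` X)" and woff: "w \<notin> cluster_set R f"
  obtains x p where "\<And>n. x n \<in> X" "x \<longlonglongrightarrow> p" "p \<in> R" "f p = w"
proof -
  obtain y where "\<And>n. y n \<in> f ` X" and limy: "y \<longlonglongrightarrow> w"
    using wcl unfolding closure_sequential by blast
  then have "\<forall>n. \<exists>x. x \<in> X \<and> y n = f x"
    by blast
  then obtain x where xX: "\<And>n. x n \<in> X" and yx: "\<And>n. y n = f (x n)"
    by metis
  have lim: "(\<lambda>n. f (x n)) \<longlonglongrightarrow> w"
    using limy by (simp flip: yx)
  obtain r p where r: "strict_mono r" and "p \<in> R" and conv: "(x \<circ> r) \<longlonglongrightarrow> p"
    using convergent_subseq_off_cluster_setE[OF _ lim woff] xX \<open>X \<subseteq> R\<close> by blast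
  have "\<forall>\<^sub>F n in sequentially. (x \<circ> r) n \<in> R"
    using xX \<open>X \<subseteq> R\<close> by (auto intro!: always_eventually)
  then have "(\<lambda>n. f ((x \<circ> r) n)) \<longlonglongrightarrow> f p"
    by (rule continuous_on_tendsto_compose[OF contf conv \<open>p \<in> R\<close>])
  moreover have "(\<lambda>n. f ((x \<circ> r) n)) \<longlonglongrightarrow> w"
    using LIMSEQ_subseq_LIMSEQ[OF lim r] by (simp add: comp_def)
  ultimately have "f p = w"
    using LIMSEQ_unique by blast
  then show thesis
    using that[of "x \<circ> r"] xX conv \<open>p \<in> R\<close> by simp
qed

lemma closed_critical_image_Un_cluster_set:
  fixes R :: "(real \<times> real) set" and f :: "real \<times> real \<Rightarrow> real \<times> real"
  assumes "open R" and contf: "continuous_on R f" and contJ: "continuous_on R (jacobian_det f)"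
  shows "closed (f ` critical_set R f \<union> cluster_set R f)"
proof -
  have "w \<in> f ` critical_set R f"
    if wcl: "w \<in> closure (f ` critical_set R f)" and woff: "w \<notin> cluster_set R f" for w
  proof -
    obtain x p where "\<And>n. x n \<in> critical_set R f" "x \<longlonglongrightarrow> p" "p \<in> R" "f p = w"
      by (rule closure_image_off_cluster_setE[OF contf _ wcl woff]) (auto simp: critical_set_def)
    moreover have "closedin (top_of_set R) (critical_set R f)"
      unfolding critical_set_def by (rule continuous_closedin_preimage_constant[OF contJ])
    ultimately show ?thesis
      using closedin_sequentially by blast
  qed
  then have "closure (f ` critical_set R f) \<subseteq> f ` critical_set R f \<union> cluster_set R f"
    by blast
  then have "closure (f ` critical_set R f \<union> cluster_set R f) \<subseteq> f ` critical_set R f \<union> cluster_set R f"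
    using closure_closed[OF closed_cluster_set[OF assms(1)]] by (simp add: closure_Un)
  then show ?thesis
    using closure_subset_eq by blast
qed

lemma jacobian_det_eq:
  assumes "(f has_derivative D) (at z)"
  shows "jacobian_det f z = fst (D (1,0)) * snd (D (0,1)) - fst (D (0,1)) * snd (D (1,0))"
  using frechet_derivative_at[OF assms] by (simp add: jacobian_det_def Let_def)

lemma C1_on_imp_differentiable_at:
  assumes "C1_on R f" "z \<in> R"
  shows "f differentiable (at z)"
  using assms unfolding C1_on_def differentiable_def by blast

lemma C1_on_imp_continuous_on:
  assumes "C1_on R f"
  shows "continuous_on R f"
  using C1_on_imp_differentiable_at[OF assms]
  by (simp add: differentiable_at_imp_differentiable_on differentiable_imp_continuous_on)

lemma C1_on_imp_continuous_on_jacobian_det: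
  assumes "C1_on R f"
  shows "continuous_on R (jacobian_det f)"
proof -
  obtain D where der: "\<And>z. z \<in> R \<Longrightarrow> (f has_derivative D z) (at z)"
    and "continuous_on R (\<lambda>z. D z (1,0))" "continuous_on R (\<lambda>z. D z (0,1))"
    using assms unfolding C1_on_def by blast
  then have "continuous_on R (\<lambda>z. fst (D z (1,0)) * snd (D z (0,1)) - fst (D z (0,1)) * snd (D z (1,0)))"
    by (intro continuous_intros)
  then show ?thesis
    by (rule continuous_on_eq) (simp add: jacobian_det_eq[OF der])
qed

lemma linear_right_inverse_det_nonzero:
  fixes L :: "real \<times> real \<Rightarrow> real \<times> real"
  assumes lin: "linear L"
    and det: "fst (L (1,0)) * snd (L (0,1)) - fst (L (0,1)) * snd (L (1,0)) \<noteq> 0"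
  shows "\<exists>g. linear g \<and> L \<circ> g = id"
proof -
  have "v = 0" if "L v = 0" for v
  proof -
    obtain x y where v: "v = (x, y)"
      by fastforce
    have "L v = L (x *\<^sub>R (1, 0)) + L (y *\<^sub>R (0, 1))"
      by (simp add: v flip: linear_add[OF lin])
    also have "\<dots> = x *\<^sub>R L (1, 0) + y *\<^sub>R L (0, 1)"
      by (simp only: linear_scale[OF lin])
    finally have "x * fst (L (1,0)) + y * fst (L (0,1)) = 0" "x * snd (L (1,0)) + y * snd (L (0,1)) = 0"
      using that by (simp_all add: prod_eq_iff)
    then have "x * (fst (L (1,0)) * snd (L (0,1)) - fst (L (0,1)) * snd (L (1,0))) = 0"
      "y * (fst (L (1,0)) * snd (L (0,1)) - fst (L (0,1)) * snd (L (1,0))) = 0"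
      by algebra+
    then show "v = 0"
      using det by (simp add: v zero_prod_def)
  qed
  then have "surj L"
    using linear_inj_imp_surj[OF lin] linear_injective_0[OF lin] by blast
  then show ?thesis
    by (rule linear_surjective_right_inverse[OF lin])
qed

lemma open_image_jacobian_det_nonzero:
  fixes U :: "(real \<times> real) set" and f :: "real \<times> real \<Rightarrow> real \<times> real"
  assumes "open U" and diff: "\<And>z. z \<in> U \<Longrightarrow> f differentiable (at z)"
    and nondeg: "\<And>z. z \<in> U \<Longrightarrow> jacobian_det f z \<noteq> 0"
  shows "open (f ` U)"
proof -
  have contf: "continuous_on U f"
    using diff by (simp add: differentiable_at_imp_differentiable_on differentiable_imp_continuous_on)
  have "f z \<in> interior (f ` U)" if zU: "z \<in> U" for z
  proof -
    define D where "D = frechet_derivative f (at z)"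
    have der: "(f has_derivative D) (at z)"
      unfolding D_def using diff[OF zU] by (rule frechet_derivative_works[THEN iffD1])
    obtain g where "linear g" "D \<circ> g = id"
      using linear_right_inverse_det_nonzero[OF has_derivative_linear[OF der]] nondeg[OF zU]
      by (auto simp: jacobian_det_eq[OF der])
    then show ?thesis
      using sussmann_open_mapping[OF \<open>open U\<close> contf zU der _ _ subset_refl] \<open>open U\<close> zU
      by (simp add: linear_conv_bounded_linear interior_open)
  qed
  then have "interior (f ` U) = f ` U"
    using interior_subset by blast
  then show ?thesis
    by (simp add: interior_eq)
qed

lemma closure_image_component_Diff_subset:
  fixes R B R0 :: "(real \<times> real) set" and f :: "real \<times> real \<Rightarrow> real \<times> real"
  assumes contf: "continuous_on R f" and clu: "cluster_set R f \<subseteq> B"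
    and R0: "R0 \<in> components (R - f -` B)"
  shows "closure (f ` R0) - B \<subseteq> f ` R0"
proof
  fix w assume w: "w \<in> closure (f ` R0) - B"
  have "R0 \<subseteq> R"
    using in_components_subset[OF R0] by blast
  then obtain x p where "\<And>n. x n \<in> R0" "x \<longlonglongrightarrow> p" "p \<in> R" "f p = w"
    using closure_image_off_cluster_setE[OF contf \<open>R0 \<subseteq> R\<close>] w clu by blast
  moreover have "p \<in> R - f -` B"
    using \<open>p \<in> R\<close> \<open>f p = w\<close> w by blast
  ultimately have "p \<in> R0"
    using closedin_sequentially[OF closedin_component[OF R0]] by blast
  then show "w \<in> f ` R0"
    using \<open>f p = w\<close> by blast
qed

theorem image_component_eq_component:
  fixes R B R0 :: "(real \<times> real) set" and f :: "real \<times> real \<Rightarrow> real \<times> real"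
  assumes "open R" and contf: "continuous_on R f" and diff: "\<And>z. z \<in> R \<Longrightarrow> f differentiable (at z)"
    and "closed B" and crit: "f ` critical_set R f \<subseteq> B" and clu: "cluster_set R f \<subseteq> B"
    and R0: "R0 \<in> components (R - f -` B)" and "z0 \<in> R0"
  shows "f ` R0 = connected_component_set (UNIV - B) (f z0)"
proof -
  define W where "W = connected_component_set (UNIV - B) (f z0)"
  have "R - f -` B = R \<inter> f -` (- B)"
    by blast
  then have "open (R - f -` B)"
    using continuous_open_preimage[OF contf \<open>open R\<close>] \<open>closed B\<close> by (simp add: open_Compl)
  then have "open R0"
    using open_components[OF _ R0] by blast
  have R0sub: "R0 \<subseteq> R - f -` B"
    using in_components_subset[OF R0] .
  have "f ` R0 \<subseteq> W"
    unfolding W_def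
  proof (rule connected_component_maximal)
    show "connected (f ` R0)"
      using in_components_connected[OF R0] continuous_on_subset[OF contf] R0sub
      by (blast intro: connected_continuous_image)
  qed (use \<open>z0 \<in> R0\<close> R0sub in auto)
  moreover have "open (f ` R0)"
  proof (rule open_image_jacobian_det_nonzero[OF \<open>open R0\<close>])
    fix z assume "z \<in> R0"
    then have "z \<in> R" "f z \<notin> B"
      using R0sub by auto
    then show "f differentiable (at z)" "jacobian_det f z \<noteq> 0"
      using diff crit by (auto simp: critical_set_def image_iff)
  qed
  ultimately have "openin (top_of_set W) (f ` R0)"
    by (auto simp: openin_open)
  moreover have "W \<inter> closure (f ` R0) \<subseteq> f ` R0"
    using closure_image_component_Diff_subset[OF contf clu R0] connected_component_subset[of "UNIV - B"]
    unfolding W_def by blast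
  then have "f ` R0 = W \<inter> closure (f ` R0)"
    using \<open>f ` R0 \<subseteq> W\<close> closure_subset[of "f ` R0"] by blast
  then have "closedin (top_of_set W) (f ` R0)"
    by (auto simp: closedin_closed)
  moreover have "connected W"
    unfolding W_def by (rule connected_connected_component)
  ultimately show ?thesis
    using \<open>z0 \<in> R0\<close> connected_clopen unfolding W_def by blast
qed

theorem theorem3p10:
  fixes R R0 :: "(real \<times> real) set" and f :: "real \<times> real \<Rightarrow> real \<times> real" and z0 :: "real \<times> real"
  assumes "open R" and "C1_on R f"
    and "R0 \<in> components (R - f -` (f ` critical_set R f \<union> cluster_set R f))"
    and "z0 \<in> R0"
  shows "f ` R0 = connected_component_set (UNIV - (f ` critical_set R f \<union> cluster_set R f)) (f z0)"
proof (rule image_component_eq_component[OF \<open>open R\<close> _ _ _ _ _ assms(3,4)])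
  show "continuous_on R f"
    using C1_on_imp_continuous_on[OF \<open>C1_on R f\<close>] .
  then show "closed (f ` critical_set R f \<union> cluster_set R f)"
    using closed_critical_image_Un_cluster_set[OF \<open>open R\<close>]
      C1_on_imp_continuous_on_jacobian_det[OF \<open>C1_on R f\<close>] by blast
  show "f differentiable (at z)" if "z \<in> R" for z
    using C1_on_imp_differentiable_at[OF \<open>C1_on R f\<close> that] .
qed auto

end
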